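(* Let $G(\pi_i,\pi_i')=\frac12\|\pi_i-\pi_i'\|^2$ and $\mu>0$. Let $K\ge1$, $c>1$, and $$T_\sigma\ge\max\Big(\frac{3}{\ln c}\ln K+\frac{\ln 64}{\ln c},\,1\Big).$$ Let $\sigma^0,\sigma^1,\dots,\sigma^K\in\mathcal X$ satisfy $$\|\pi^{\mu,\sigma^k}-\sigma^{k+1}\|\le\|\pi^{\mu,\sigma^k}-\sigma^k\|\,c^{-T_\sigma}\quad\text{for } k=0,\dots,K-1.$$ Assume $\sqrt{\sum_{i=1}^N\|\nabla_{\pi_i}v_i(\pi)\|^2}\le\zeta$ for all $\pi\in\mathcal X$. Then for any Nash equilibrium $\pi^*\in\Pi^*$, $$\mathrm{exploit}(\sigma^K)\le\frac{2\sqrt2\big((\mu+L)\,\mathrm{diam}(\mathcal X)+\zeta\big)}{\sqrt K}\sqrt{\|\pi^*-\sigma^0\|\Big(8\|\pi^*-\sigma^0\|+\frac\zeta\mu\Big)}.$$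
   Context: Game. Let $N\ge1$. For each $i\in[N]$, $\mathcal X_i\subseteq\mathbb R^{d_i}$ is a nonempty compact convex set, and $\mathcal X=\prod_i\mathcal X_i$. Each $v_i:\mathcal X\to\mathbb R$ is differentiable, with block gradient $\nabla_{\pi_i}v_i$. The norm is Euclidean, with $\|\pi\|^2=\sum_i\|\pi_i\|^2$. The game is monotone: $\sum_i\langle\nabla_{\pi_i}v_i(\pi)-\nabla_{\pi_i}v_i(\pi'),\pi_i-\pi_i'\rangle\le0$ for all $\pi,\pi'$. The game is $L$-smooth: $\sum_i\|\nabla_{\pi_i}v_i(\pi)-\nabla_{\pi_i}v_i(\pi')\|^2\le L^2\|\pi-\pi'\|^2$. A Nash equilibrium is a $\pi^*\in\mathcal X$ with $v_i(\pi^* )\ge v_i(\pi_i,\pi^*_{-i})$ for all $i$ and $\pi_i\in\mathcal X_i$. $\Pi^*$ is the set of Nash equilibria. Exploitability and diameter: $\mathrm{exploit}(\pi)=\sum_i(\max_{\tilde\pi_i\in\mathcal X_i}v_i(\tilde\pi_i,\pi_{-i})-v_i(\pi))$ and $\mathrm{diam}(\mathcal X)=\sup_{\pi,\pi'\in\mathcal X}\|\pi-\pi'\|$. Perturbed equilibrium. For $\mu>0$ and $\sigma\in\mathcal X$, $\pi^{\mu,\sigma}$ is the (unique) profile with $\pi_i^{\mu,\sigma}\in\arg\max_{\pi_i\in\mathcal X_i}\{v_i(\pi_i,\pi^{\mu,\sigma}_{-i})-\mu G(\pi_i,\sigma_i)\}$ for all $i$. *)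

theory Defs
  imports "HOL-Analysis.Analysis"
begin

text \<open>Players are indexed by {..<N}; all strategy spaces are subsets of a common
  Euclidean space 'e. A profile is an extensional function nat => 'e.\<close>

definition profiles :: "nat \<Rightarrow> (nat \<Rightarrow> 'e set) \<Rightarrow> (nat \<Rightarrow> 'e) set" where
  "profiles N X = PiE {..<N} X"

definition pnorm :: "nat \<Rightarrow> (nat \<Rightarrow> 'e::real_normed_vector) \<Rightarrow> real" where
  "pnorm N p = sqrt (\<Sum>i<N. (norm (p i))\<^sup>2)"

definition pdist :: "nat \<Rightarrow> (nat \<Rightarrow> 'e::real_normed_vector) \<Rightarrow> (nat \<Rightarrow> 'e) \<Rightarrow> real" where
  "pdist N p q = pnorm N (\<lambda>i. p i - q i)"

definition diam_prof :: "nat \<Rightarrow> (nat \<Rightarrow> 'e::real_normed_vector set) \<Rightarrow> real" where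
  "diam_prof N X = (SUP pq \<in> profiles N X \<times> profiles N X. pdist N (fst pq) (snd pq))"

definition Greg :: "'e::real_normed_vector \<Rightarrow> 'e \<Rightarrow> real" where
  "Greg x y = (norm (x - y))\<^sup>2 / 2"

definition nash_eq :: "nat \<Rightarrow> (nat \<Rightarrow> 'e set) \<Rightarrow> (nat \<Rightarrow> (nat \<Rightarrow> 'e) \<Rightarrow> real)
    \<Rightarrow> (nat \<Rightarrow> 'e) \<Rightarrow> bool" where
  "nash_eq N X v p \<longleftrightarrow> p \<in> profiles N X \<and>
     (\<forall>i<N. \<forall>x\<in>X i. v i (p(i := x)) \<le> v i p)"

definition perturbed_eq :: "nat \<Rightarrow> (nat \<Rightarrow> 'e::real_normed_vector set)
    \<Rightarrow> (nat \<Rightarrow> (nat \<Rightarrow> 'e) \<Rightarrow> real) \<Rightarrow> real \<Rightarrow> (nat \<Rightarrow> 'e) \<Rightarrow> (nat \<Rightarrow> 'e) \<Rightarrow> bool" where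
  "perturbed_eq N X v \<mu> \<sigma> p \<longleftrightarrow> p \<in> profiles N X \<and>
     (\<forall>i<N. \<forall>x\<in>X i. v i (p(i := x)) - \<mu> * Greg x (\<sigma> i) \<le> v i p - \<mu> * Greg (p i) (\<sigma> i))"

definition exploit :: "nat \<Rightarrow> (nat \<Rightarrow> 'e set) \<Rightarrow> (nat \<Rightarrow> (nat \<Rightarrow> 'e) \<Rightarrow> real)
    \<Rightarrow> (nat \<Rightarrow> 'e) \<Rightarrow> real" where
  "exploit N X v p = (\<Sum>i<N. (SUP x \<in> X i. v i (p(i := x))) - v i p)"

end

theory Submission
  imports Defs
begin

text \<open>Let p_k be the perturbed equilibrium anchored at \<sigma>_k, r_k = |p_k - \<sigma>_k| and
  \<epsilon> = c^(-T).  Adding the first-order conditions of two perturbed equilibria and using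
  monotonicity gives r_k^2 + |\<pi>* - p_k|^2 \<le> |\<pi>* - \<sigma>_k|^2 and r_(k+1) \<le> (1 + 2\<epsilon>) r_k.
  As \<sigma>_(k+1) lies within \<epsilon> r_k of p_k, the squared distances to \<pi>* telescope up to the
  factor (1 + 2\<epsilon>)^K \<le> 2, so the r_k^2 sum to at most 2 |\<pi>* - \<sigma>_0|^2, while the growth
  bound gives r_(K-1) \<le> 2 r_k for all k; hence K r_(K-1)^2 \<le> 8 |\<pi>* - \<sigma>_0|^2.  Finally, monotonicity makes every payoff concave
  in the player's own strategy, so the exploitability of \<sigma>_K is at most a linear gap
  \<langle>\<nabla>v(\<sigma>_K), q - \<sigma>_K\<rangle>, which the first-order condition at p_(K-1) and smoothness bound by
  ((\<mu> + L) diam + \<zeta>) r_(K-1).\<close>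

section \<open>Geometry of strategy profiles\<close>

definition pinner :: "nat \<Rightarrow> (nat \<Rightarrow> 'e::real_inner) \<Rightarrow> (nat \<Rightarrow> 'e) \<Rightarrow> real" where
  "pinner N p q = (\<Sum>i<N. p i \<bullet> q i)"

lemma pinner_commute: "pinner N p q = pinner N q p"
  by (simp add: pinner_def inner_commute)

lemma pinner_diff_left: "pinner N (p - q) r = pinner N p r - pinner N q r"
  by (simp add: pinner_def inner_diff_left sum_subtractf)

lemma pinner_diff_right: "pinner N r (p - q) = pinner N r p - pinner N r q"
  by (simp add: pinner_def inner_diff_right sum_subtractf)

lemma pnorm_eq_L2_set: "pnorm N p = L2_set (\<lambda>i. norm (p i)) {..<N}"
  by (simp add: pnorm_def L2_set_def)

lemma pdist_eq_pnorm_diff: "pdist N p q = pnorm N (p - q)"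
  by (simp add: pdist_def fun_diff_def)

lemma pnorm_nonneg: "0 \<le> pnorm N p"
  by (simp add: pnorm_def sum_nonneg)

lemma pdist_nonneg: "0 \<le> pdist N p q"
  by (simp add: pdist_def pnorm_nonneg)

lemma pdist_commute: "pdist N p q = pdist N q p"
  by (simp add: pdist_def pnorm_def norm_minus_commute)

lemma power2_pnorm: "(pnorm N p)\<^sup>2 = pinner N p p"
  by (simp add: pnorm_def pinner_def sum_nonneg power2_norm_eq_inner)

lemma power2_pdist: "(pdist N p q)\<^sup>2 = pinner N (p - q) (p - q)"
  by (simp add: pdist_eq_pnorm_diff power2_pnorm)

lemma pinner_le_pnorm_mult: "pinner N p q \<le> pnorm N p * pnorm N q"
proof -
  have "pinner N p q \<le> (\<Sum>i<N. \<bar>norm (p i)\<bar> * \<bar>norm (q i)\<bar>)"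
    unfolding pinner_def by (intro sum_mono) (simp add: norm_cauchy_schwarz)
  also have "\<dots> \<le> pnorm N p * pnorm N q"
    unfolding pnorm_eq_L2_set by (rule L2_set_mult_ineq)
  finally show ?thesis .
qed

lemma pinner_le_pdist_mult: "pinner N (a - b) (c - d) \<le> pdist N a b * pdist N c d"
  unfolding pdist_eq_pnorm_diff by (rule pinner_le_pnorm_mult)

lemma pdist_triangle: "pdist N a c \<le> pdist N a b + pdist N b c"
proof -
  have "pdist N a c \<le> L2_set (\<lambda>i. norm (a i - b i) + norm (b i - c i)) {..<N}"
    unfolding pdist_def pnorm_eq_L2_set
    by (rule L2_set_mono) (auto intro: norm_diff_triangle_le)
  also have "\<dots> \<le> pdist N a b + pdist N b c"
    unfolding pdist_def pnorm_eq_L2_set by (rule L2_set_triangle_ineq)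
  finally show ?thesis .
qed

lemma power2_pdist_add_le:
  assumes "0 \<le> pinner N (p - s) (z - p)"
  shows "(pdist N p s)\<^sup>2 + (pdist N z p)\<^sup>2 \<le> (pdist N z s)\<^sup>2"
  using assms pinner_commute[of N z s] pinner_commute[of N p s] pinner_commute[of N z p]
  unfolding power2_pdist pinner_diff_left pinner_diff_right by linarith

lemma power2_pdist_le_residuals:
  assumes "0 \<le> pinner N (a - x) (b - a) + pinner N (b - y) (a - b)"
  shows "(pdist N b y)\<^sup>2 \<le> pdist N a x * pdist N b y + (pdist N a x + pdist N b y) * pdist N y a"
proof -
  have "pinner N (a - x) (b - y) \<le> pdist N a x * pdist N b y"
    and "pinner N (a - x) (y - a) \<le> pdist N a x * pdist N y a"
    and "pinner N (b - y) (a - y) \<le> pdist N b y * pdist N a y"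
    by (rule pinner_le_pdist_mult)+
  with assms show ?thesis
    using pinner_commute[of N x y] pinner_commute[of N x a] pinner_commute[of N x b]
      pinner_commute[of N y a] pinner_commute[of N y b] pinner_commute[of N a b]
      pdist_commute[of N a y]
    unfolding power2_pdist pinner_diff_left pinner_diff_right by (simp add: algebra_simps)
qed

lemma profiles_mem: "p \<in> profiles N X \<Longrightarrow> i < N \<Longrightarrow> p i \<in> X i"
  by (auto simp: profiles_def PiE_mem)

lemma profiles_upd: "p \<in> profiles N X \<Longrightarrow> i < N \<Longrightarrow> x \<in> X i \<Longrightarrow> p(i := x) \<in> profiles N X"
  unfolding profiles_def using PiE_fun_upd[of x X i p "{..<N}"] by (simp add: insert_absorb)

lemma pdist_le_diam_prof:
  fixes X :: "nat \<Rightarrow> 'e::real_normed_vector set"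
  assumes X: "\<And>i. i < N \<Longrightarrow> bounded (X i)"
    and p: "p \<in> profiles N X" and q: "q \<in> profiles N X"
  shows "pdist N p q \<le> diam_prof N X"
proof -
  obtain B where B: "\<And>i x. i < N \<Longrightarrow> x \<in> X i \<Longrightarrow> norm x \<le> B i"
    using X unfolding bounded_iff by metis
  have "pdist N a b \<le> (\<Sum>i<N. 2 * B i)" if "a \<in> profiles N X" "b \<in> profiles N X" for a b
  proof -
    have "pdist N a b \<le> (\<Sum>i<N. norm (a i - b i))"
      unfolding pdist_def pnorm_eq_L2_set by (rule L2_set_le_sum) simp
    also have "\<dots> \<le> (\<Sum>i<N. 2 * B i)"
    proof (rule sum_mono)
      fix i assume "i \<in> {..<N}"
      then show "norm (a i - b i) \<le> 2 * B i"
        using norm_triangle_ineq4[of "a i" "b i"] B[of i "a i"] B[of i "b i"]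
          profiles_mem[OF that(1)] profiles_mem[OF that(2)] by force
    qed
    finally show ?thesis .
  qed
  then have "bdd_above ((\<lambda>pq. pdist N (fst pq) (snd pq)) ` (profiles N X \<times> profiles N X))"
    by (intro bdd_aboveI2) auto
  then show ?thesis
    unfolding diam_prof_def using p q by (force intro: cSUP_upper2)
qed

lemma diam_prof_nonneg:
  fixes X :: "nat \<Rightarrow> 'e::real_normed_vector set"
  assumes "\<And>i. i < N \<Longrightarrow> bounded (X i)" and "p \<in> profiles N X"
  shows "0 \<le> diam_prof N X"
  using pdist_nonneg pdist_le_diam_prof[OF assms(1) assms(2) assms(2)] by (rule order_trans)

section \<open>Real estimates\<close>

lemma DERIV_nonpos_at_right_max:
  fixes \<phi> :: "real \<Rightarrow> real"
  assumes "DERIV \<phi> 0 :> D" and "\<And>t. 0 < t \<Longrightarrow> t \<le> 1 \<Longrightarrow> \<phi> t \<le> \<phi> 0"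
  shows "D \<le> 0"
proof (rule ccontr)
  assume "\<not> D \<le> 0"
  then obtain d where "d > 0" and "\<And>t. 0 < t \<Longrightarrow> t < d \<Longrightarrow> \<phi> 0 < \<phi> t"
    using DERIV_pos_inc_right[OF assms(1)] by force
  then show False
    using assms(2)[of "min (d/2) 1"] by (smt (verit) field_sum_of_halves)
qed

lemma le_one_plus_two_mult_if_power2_le:
  fixes r s \<epsilon> :: real
  assumes "0 \<le> r" "0 \<le> \<epsilon>" and quadratic: "s\<^sup>2 \<le> r * s + (r + s) * (\<epsilon> * r)"
  shows "s \<le> (1 + 2 * \<epsilon>) * r"
proof (cases "s \<le> r")
  case True
  moreover have "0 \<le> 2 * \<epsilon> * r"
    using assms(1,2) by simp
  ultimately show ?thesis
    by (simp add: distrib_right)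
next
  case False
  then have "s * s \<le> s * ((1 + 2 * \<epsilon>) * r)"
    using quadratic assms mult_right_mono[of r s "\<epsilon> * r"]
    by (simp add: power2_eq_square algebra_simps)
  then show ?thesis
    using False assms(1) by simp
qed

lemma one_plus_power_le_two:
  fixes x :: real
  assumes "0 \<le> x" "real n * x \<le> 1/2"
  shows "(1 + x) ^ n \<le> 2"
proof -
  have "(1 + x) ^ n \<le> exp x ^ n"
    using assms(1) by (intro power_mono) (auto simp: exp_ge_add_one_self)
  also have "\<dots> = exp (real n * x)"
    by (simp add: exp_of_nat_mult)
  also have "\<dots> \<le> exp (1/2)"
    using assms(2) by simp
  also have "\<dots> \<le> 2"
    by (rule exp_half_le2)
  finally show ?thesis .
qed

lemma power2_add_power2_le_step:
  fixes r w d d' \<epsilon> :: real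
  assumes "0 \<le> \<epsilon>" "\<epsilon> \<le> 1" "0 \<le> d'" "d' \<le> w + \<epsilon> * r" "r\<^sup>2 + w\<^sup>2 \<le> d\<^sup>2"
  shows "d'\<^sup>2 + r\<^sup>2 \<le> (1 + 2 * \<epsilon>) * d\<^sup>2"
proof -
  have "d'\<^sup>2 \<le> (w + \<epsilon> * r)\<^sup>2"
    using assms(3,4) by (intro power_mono) auto
  also have "\<dots> = w\<^sup>2 + \<epsilon> * (2 * r * w) + \<epsilon> * (\<epsilon> * r\<^sup>2)"
    by (simp add: power2_eq_square algebra_simps)
  also have "\<dots> \<le> w\<^sup>2 + \<epsilon> * d\<^sup>2 + \<epsilon> * d\<^sup>2"
  proof -
    have "2 * r * w \<le> d\<^sup>2"
      using assms(5) sum_squares_bound[of r w] by linarith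
    moreover have "\<epsilon> * r\<^sup>2 \<le> d\<^sup>2"
      using assms(1,2,5) mult_left_le_one_le[of "r\<^sup>2" \<epsilon>] zero_le_power2[of w] zero_le_power2[of r]
      by linarith
    ultimately show ?thesis
      using assms(1) by (intro add_mono mult_left_mono) auto
  qed
  finally show ?thesis
    using assms(5) by (simp add: algebra_simps)
qed

lemma sum_power2_le_power_mult:
  fixes r d :: "nat \<Rightarrow> real"
  assumes "1 \<le> a" and step: "\<And>k. k < n \<Longrightarrow> (d (Suc k))\<^sup>2 + (r k)\<^sup>2 \<le> a * (d k)\<^sup>2"
  shows "(\<Sum>k<n. (r k)\<^sup>2) + (d n)\<^sup>2 \<le> a ^ n * (d 0)\<^sup>2"
  using step
proof (induction n)
  case (Suc n)
  have "(\<Sum>k<Suc n. (r k)\<^sup>2) + (d (Suc n))\<^sup>2 \<le> (\<Sum>k<n. (r k)\<^sup>2) + a * (d n)\<^sup>2"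
    using Suc.prems[of n] by simp
  also have "\<dots> \<le> a * ((\<Sum>k<n. (r k)\<^sup>2) + (d n)\<^sup>2)"
    using assms(1) mult_left_mono[OF assms(1), of "\<Sum>k<n. (r k)\<^sup>2"] by (simp add: sum_nonneg algebra_simps)
  also have "\<dots> \<le> a * (a ^ n * (d 0)\<^sup>2)"
    using Suc assms(1) by (intro mult_left_mono) auto
  finally show ?case
    by simp
qed simp

lemma le_power_mult_of_step:
  fixes r :: "nat \<Rightarrow> real"
  assumes "0 \<le> a" and step: "\<And>k. Suc k < n \<Longrightarrow> r (Suc k) \<le> a * r k" and "k + j < n"
  shows "r (k + j) \<le> a ^ j * r k"
  using assms(3)
proof (induction j)
  case (Suc j)
  then have "r (Suc (k + j)) \<le> a * (a ^ j * r k)"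
    using step[of "k + j"] assms(1) by (smt (verit) Suc_lessD add_Suc_right mult_left_mono)
  then show ?case
    by simp
qed simp

text \<open>In the application \<open>r k = |p_k - \<sigma>_k|\<close>, \<open>w k = |\<pi>* - p_k|\<close> and \<open>d k = |\<pi>* - \<sigma>_k|\<close>.\<close>

lemma residual_recursion_bound:
  fixes r d w :: "nat \<Rightarrow> real"
  assumes K: "1 \<le> K" and \<epsilon>: "0 \<le> \<epsilon>" "4 * real K * \<epsilon> \<le> 1"
    and nonneg: "\<And>k. 0 \<le> r k" "\<And>k. 0 \<le> d k"
    and pythagoras: "\<And>k. k < K \<Longrightarrow> (r k)\<^sup>2 + (w k)\<^sup>2 \<le> (d k)\<^sup>2"
    and anchor_step: "\<And>k. k < K \<Longrightarrow> d (Suc k) \<le> w k + \<epsilon> * r k"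
    and residual_step: "\<And>k. Suc k < K \<Longrightarrow> r (Suc k) \<le> (1 + 2 * \<epsilon>) * r k"
  shows "real K * (r (K - 1))\<^sup>2 \<le> 8 * (d 0)\<^sup>2"
proof -
  have \<epsilon>_le: "\<epsilon> \<le> 1"
    using K \<epsilon> mult_right_mono[of 1 "real K" \<epsilon>] by simp
  have growth: "(1 + 2 * \<epsilon>) ^ K \<le> 2"
    using \<epsilon> by (intro one_plus_power_le_two) auto
  have "(\<Sum>k<K. (r k)\<^sup>2) + (d K)\<^sup>2 \<le> (1 + 2 * \<epsilon>) ^ K * (d 0)\<^sup>2"
    using \<epsilon> \<epsilon>_le nonneg pythagoras anchor_step
    by (intro sum_power2_le_power_mult power2_add_power2_le_step) auto
  then have sum_bound: "(\<Sum>k<K. (r k)\<^sup>2) \<le> 2 * (d 0)\<^sup>2"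
    using growth mult_right_mono[OF growth, of "(d 0)\<^sup>2"] by (smt (verit) zero_le_power2)
  have "(r (K - 1))\<^sup>2 \<le> 4 * (r k)\<^sup>2" if k: "k < K" for k
  proof -
    have "r (K - 1) = r (k + (K - 1 - k))"
      using k by simp
    also have "\<dots> \<le> (1 + 2 * \<epsilon>) ^ (K - 1 - k) * r k"
      using \<epsilon> k residual_step by (intro le_power_mult_of_step[where n = K]) auto
    also have "\<dots> \<le> 2 * r k"
      using \<epsilon> growth nonneg(1)[of k] power_increasing[of "K - 1 - k" K "1 + 2 * \<epsilon>"]
      by (intro mult_right_mono) auto
    finally show ?thesis
      using nonneg(1)[of "K - 1"] power_mono[of "r (K - 1)" "2 * r k" 2] by (simp add: power_mult_distrib)
  qed
  then have "real K * (r (K - 1))\<^sup>2 \<le> (\<Sum>k<K. 4 * (r k)\<^sup>2)"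
    using sum_mono[of "{..<K}" "\<lambda>_. (r (K - 1))\<^sup>2"] by simp
  also have "\<dots> \<le> 8 * (d 0)\<^sup>2"
    using sum_bound by (simp add: sum_distrib_left[symmetric])
  finally show ?thesis .
qed

lemma tolerance_bound:
  assumes "1 < c" "1 \<le> K" "3 / ln c * ln (real K) + ln 64 / ln c \<le> T"
  shows "real K * c powr (- T) \<le> 1/64"
proof -
  have "ln (64 * real K) \<le> 3 * ln (real K) + ln 64"
    using assms(2) by (simp add: ln_mult)
  also have "\<dots> = (3 / ln c * ln (real K) + ln 64 / ln c) * ln c"
    using assms(1) by (simp add: field_simps)
  also have "\<dots> \<le> T * ln c"
    using assms(1,3) by (intro mult_right_mono) auto
  finally have "exp (ln (64 * real K)) \<le> exp (T * ln c)"
    by simp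
  then have "64 * real K \<le> c powr T"
    using assms(1,2) by (simp add: powr_def mult.commute)
  then show ?thesis
    using assms(1) by (simp add: powr_minus field_simps)
qed

lemma le_two_sqrt_two_div_sqrt:
  fixes r A :: real
  assumes "0 < K" "K * r\<^sup>2 \<le> 8 * A"
  shows "r \<le> 2 * sqrt 2 / sqrt K * sqrt A"
proof -
  have "r \<le> sqrt (8 * A / K)"
    using assms by (intro real_le_rsqrt) (simp add: field_simps)
  also have "sqrt (8 * A / K) = sqrt (2\<^sup>2 * 2) * sqrt A / sqrt K"
    by (simp add: real_sqrt_mult real_sqrt_divide)
  also have "\<dots> = 2 * sqrt 2 / sqrt K * sqrt A"
    by (simp only: real_sqrt_mult real_sqrt_abs) simp
  finally show ?thesis .
qed

section \<open>Optimality conditions in monotone games\<close>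

lemma nash_eq_imp_perturbed_eq: "nash_eq N X v z \<Longrightarrow> perturbed_eq N X v 0 s z"
  by (simp add: nash_eq_def perturbed_eq_def)

locale smooth_game =
  fixes N :: nat and X :: "nat \<Rightarrow> 'e::euclidean_space set"
    and v :: "nat \<Rightarrow> (nat \<Rightarrow> 'e) \<Rightarrow> real" and grad :: "nat \<Rightarrow> (nat \<Rightarrow> 'e) \<Rightarrow> 'e"
  assumes convex_strategies: "\<And>i. i < N \<Longrightarrow> convex (X i)"
    and partial_derivative: "\<And>i p. i < N \<Longrightarrow> p \<in> profiles N X \<Longrightarrow>
      ((\<lambda>x. v i (p(i := x))) has_derivative (\<lambda>h. grad i p \<bullet> h)) (at (p i))"
begin

lemma deviation_segment_in_profiles:
  assumes "p \<in> profiles N X" "i < N" "x \<in> X i" "0 \<le> t" "t \<le> 1"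
  shows "p(i := p i + t *\<^sub>R (x - p i)) \<in> profiles N X"
proof -
  have "p i + t *\<^sub>R (x - p i) = (1 - t) *\<^sub>R p i + t *\<^sub>R x"
    by (simp add: algebra_simps)
  also have "\<dots> \<in> X i"
    using assms profiles_mem[OF assms(1,2)] by (intro convexD_alt convex_strategies)
  finally show ?thesis
    by (rule profiles_upd[OF assms(1,2)])
qed

lemma DERIV_payoff_along_deviation:
  assumes "i < N" "p(i := p i + t *\<^sub>R h) \<in> profiles N X"
  shows "DERIV (\<lambda>t. v i (p(i := p i + t *\<^sub>R h))) t :> grad i (p(i := p i + t *\<^sub>R h)) \<bullet> h"
proof -
  have "((\<lambda>t. p i + t *\<^sub>R h) has_derivative (\<lambda>t. t *\<^sub>R h)) (at t)"
    by (auto intro!: derivative_eq_intros)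
  moreover have "((\<lambda>x. v i (p(i := x))) has_derivative (\<lambda>k. grad i (p(i := p i + t *\<^sub>R h)) \<bullet> k))
      (at (p i + t *\<^sub>R h))"
    using partial_derivative[OF assms] by simp
  ultimately have "((\<lambda>t. v i (p(i := p i + t *\<^sub>R h))) has_derivative
      (\<lambda>s. grad i (p(i := p i + t *\<^sub>R h)) \<bullet> (s *\<^sub>R h))) (at t)"
    by (rule has_derivative_compose)
  then show ?thesis
    by (simp add: has_field_derivative_def mult_commute_abs)
qed

lemma perturbed_eq_first_order:
  assumes "perturbed_eq N X v \<mu> s p" "i < N" "x \<in> X i"
  shows "grad i p \<bullet> (x - p i) \<le> \<mu> * ((p i - s i) \<bullet> (x - p i))"
proof -
  define h where "h = x - p i"
  define a where "a = p i - s i"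
  define \<phi> where "\<phi> t = v i (p(i := p i + t *\<^sub>R h)) - \<mu> * Greg (p i + t *\<^sub>R h) (s i)" for t
  have p: "p \<in> profiles N X"
    using assms(1) by (simp add: perturbed_eq_def)
  have Greg_eq: "Greg (p i + t *\<^sub>R h) (s i) = (a \<bullet> a + 2 * t * (a \<bullet> h) + t\<^sup>2 * (h \<bullet> h)) / 2" for t
  proof -
    have "p i + t *\<^sub>R h - s i = a + t *\<^sub>R h"
      by (simp add: a_def)
    then show ?thesis
      unfolding Greg_def power2_norm_eq_inner
      by (simp add: inner_add_left inner_add_right power2_eq_square inner_commute algebra_simps)
  qed
  have "DERIV \<phi> 0 :> grad i p \<bullet> h - \<mu> * (a \<bullet> h)"
    using DERIV_payoff_along_deviation[of i p 0 h] p assms(2)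
    unfolding \<phi>_def Greg_eq by (auto intro!: derivative_eq_intros)
  moreover have "\<phi> t \<le> \<phi> 0" if "0 < t" "t \<le> 1" for t
  proof -
    have "p i + t *\<^sub>R h \<in> X i"
      using profiles_mem[OF deviation_segment_in_profiles[OF p assms(2,3)] assms(2)] that
      by (simp add: h_def)
    then show ?thesis
      using assms(1,2) unfolding \<phi>_def perturbed_eq_def by simp
  qed
  ultimately have "grad i p \<bullet> h - \<mu> * (a \<bullet> h) \<le> 0"
    by (rule DERIV_nonpos_at_right_max)
  then show ?thesis
    by (simp add: h_def a_def)
qed

lemma perturbed_eq_pinner_le:
  assumes "perturbed_eq N X v \<mu> s p" "q \<in> profiles N X"
  shows "pinner N (\<lambda>i. grad i p) (q - p) \<le> \<mu> * pinner N (p - s) (q - p)"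
  unfolding pinner_def sum_distrib_left
  using perturbed_eq_first_order[OF assms(1)] profiles_mem[OF assms(2)] by (auto intro: sum_mono)

end

locale monotone_game = smooth_game +
  assumes monotone: "\<And>p q. p \<in> profiles N X \<Longrightarrow> q \<in> profiles N X \<Longrightarrow>
      (\<Sum>i<N. (grad i p - grad i q) \<bullet> (p i - q i)) \<le> 0"
begin

lemma pinner_grad_monotone:
  assumes "p \<in> profiles N X" "q \<in> profiles N X"
  shows "0 \<le> pinner N (\<lambda>i. grad i p) (q - p) + pinner N (\<lambda>i. grad i q) (p - q)"
proof -
  have "pinner N (\<lambda>i. grad i p) (q - p) + pinner N (\<lambda>i. grad i q) (p - q)
      = - (\<Sum>i<N. (grad i p - grad i q) \<bullet> (p i - q i))"
    by (simp add: pinner_def inner_diff_left inner_diff_right sum.distrib sum_subtractf)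
  then show ?thesis
    using monotone[OF assms] by simp
qed

lemma perturbed_eq_pair:
  assumes a: "perturbed_eq N X v \<mu> x a" and b: "perturbed_eq N X v \<mu>' y b"
  shows "0 \<le> \<mu> * pinner N (a - x) (b - a) + \<mu>' * pinner N (b - y) (a - b)"
proof -
  have "a \<in> profiles N X" "b \<in> profiles N X"
    using a b by (simp_all add: perturbed_eq_def)
  then show ?thesis
    using perturbed_eq_pinner_le[OF a \<open>b \<in> _\<close>] perturbed_eq_pinner_le[OF b \<open>a \<in> _\<close>]
      pinner_grad_monotone[of a b] by linarith
qed

lemma grad_monotone_along_coordinate:
  assumes p: "p \<in> profiles N X" and i: "i < N" and p': "p(i := y) \<in> profiles N X"
  shows "(grad i (p(i := y)) - grad i p) \<bullet> (y - p i) \<le> 0"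
proof -
  let ?term = "\<lambda>j. (grad j (p(i := y)) - grad j p) \<bullet> ((p(i := y)) j - p j)"
  have "(\<Sum>j<N. ?term j) = ?term i + (\<Sum>j\<in>{..<N} - {i}. ?term j)"
    using i by (subst sum.remove) auto
  also have "(\<Sum>j\<in>{..<N} - {i}. ?term j) = 0"
    by (rule sum.neutral) auto
  also have "?term i + 0 = (grad i (p(i := y)) - grad i p) \<bullet> (y - p i)"
    by simp
  finally show ?thesis
    using monotone[OF p' p] by linarith
qed

text \<open>Monotonicity makes each payoff concave in the player's own strategy.\<close>

lemma payoff_le_linearization:
  assumes p: "p \<in> profiles N X" and i: "i < N" and x: "x \<in> X i"
  shows "v i (p(i := x)) \<le> v i p + grad i p \<bullet> (x - p i)"
proof -
  define h where "h = x - p i"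
  define P where "P t = p(i := p i + t *\<^sub>R h)" for t
  have P: "P t \<in> profiles N X" if "0 \<le> t" "t \<le> 1" for t
    unfolding P_def h_def using deviation_segment_in_profiles[OF p i x that] .
  have "DERIV (\<lambda>t. v i (P t)) t :> grad i (P t) \<bullet> h" if "0 \<le> t" "t \<le> 1" for t
    using DERIV_payoff_along_deviation[OF i] P[OF that] unfolding P_def by blast
  then obtain z where z: "0 < z" "z < 1"
    and mvt: "v i (P 1) - v i (P 0) = (1 - 0) * (grad i (P z) \<bullet> h)"
    using MVT2[of 0 1 "\<lambda>t. v i (P t)" "\<lambda>t. grad i (P t) \<bullet> h"] by auto
  have "(grad i (P z) - grad i p) \<bullet> (z *\<^sub>R h) \<le> 0"
    using grad_monotone_along_coordinate[OF p i, of "p i + z *\<^sub>R h"] P[of z] z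
    by (simp add: P_def)
  then have "grad i (P z) \<bullet> h \<le> grad i p \<bullet> h"
    using z by (simp add: inner_diff_left mult_le_0_iff)
  then show ?thesis
    using mvt by (simp add: P_def h_def)
qed

lemma exploit_le_pinner_grad:
  assumes X: "\<And>i. i < N \<Longrightarrow> compact (X i) \<and> X i \<noteq> {}" and p: "p \<in> profiles N X"
  shows "\<exists>q\<in>profiles N X. exploit N X v p \<le> pinner N (\<lambda>i. grad i p) (q - p)"
proof -
  have "\<forall>i\<in>{..<N}. \<exists>x\<in>X i. \<forall>y\<in>X i. grad i p \<bullet> y \<le> grad i p \<bullet> x"
    using X by (auto intro!: continuous_attains_sup continuous_intros)
  then obtain f where f: "\<And>i. i < N \<Longrightarrow> f i \<in> X i \<and> (\<forall>y\<in>X i. grad i p \<bullet> y \<le> grad i p \<bullet> f i)"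
    by (metis bchoice lessThan_iff)
  define q where "q = restrict f {..<N}"
  have "q \<in> profiles N X"
    using f by (simp add: q_def profiles_def)
  moreover have "exploit N X v p \<le> pinner N (\<lambda>i. grad i p) (q - p)"
    unfolding exploit_def pinner_def
  proof (rule sum_mono)
    fix i assume "i \<in> {..<N}"
    then have i: "i < N" by simp
    have "v i (p(i := x)) \<le> v i p + grad i p \<bullet> (q i - p i)" if "x \<in> X i" for x
      using payoff_le_linearization[OF p i that] f[OF i] that i
      by (force simp: q_def inner_diff_right)
    then have "(SUP x \<in> X i. v i (p(i := x))) \<le> v i p + grad i p \<bullet> (q i - p i)"
      using X[OF i] by (blast intro: cSUP_least)
    then show "(SUP x \<in> X i. v i (p(i := x))) - v i p \<le> grad i p \<bullet> (q - p) i"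
      by simp
  qed
  ultimately show ?thesis
    by blast
qed

lemma power2_pdist_perturbed_eq_nash:
  assumes "0 < \<mu>" "perturbed_eq N X v \<mu> s p" "nash_eq N X v z"
  shows "(pdist N p s)\<^sup>2 + (pdist N z p)\<^sup>2 \<le> (pdist N z s)\<^sup>2"
proof (rule power2_pdist_add_le)
  show "0 \<le> pinner N (p - s) (z - p)"
    using perturbed_eq_pair[OF assms(2) nash_eq_imp_perturbed_eq[OF assms(3)]] assms(1)
    by (simp add: zero_le_mult_iff)
qed

lemma pdist_perturbed_eq_step:
  assumes "0 < \<mu>" "0 \<le> \<epsilon>" "perturbed_eq N X v \<mu> x a" "perturbed_eq N X v \<mu> y b"
    and close: "pdist N y a \<le> \<epsilon> * pdist N a x"
  shows "pdist N b y \<le> (1 + 2 * \<epsilon>) * pdist N a x"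
proof (rule le_one_plus_two_mult_if_power2_le)
  have "0 \<le> pinner N (a - x) (b - a) + pinner N (b - y) (a - b)"
    using perturbed_eq_pair[OF assms(3,4)] assms(1)
    by (simp add: distrib_left[symmetric] zero_le_mult_iff)
  then have "(pdist N b y)\<^sup>2 \<le> pdist N a x * pdist N b y + (pdist N a x + pdist N b y) * pdist N y a"
    by (rule power2_pdist_le_residuals)
  also have "\<dots> \<le> pdist N a x * pdist N b y + (pdist N a x + pdist N b y) * (\<epsilon> * pdist N a x)"
    using close by (intro add_left_mono mult_left_mono) (auto intro: add_nonneg_nonneg pdist_nonneg)
  finally show "(pdist N b y)\<^sup>2 \<le> \<dots>" .
qed (use assms pdist_nonneg in auto)

lemma last_residual_bound:
  assumes "0 < \<mu>" "1 \<le> K" "0 \<le> \<epsilon>" "4 * real K * \<epsilon> \<le> 1" "nash_eq N X v z"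
    and P: "\<And>k. k < K \<Longrightarrow> perturbed_eq N X v \<mu> (\<sigma> k) (P k) \<and>
      pdist N (P k) (\<sigma> (Suc k)) \<le> \<epsilon> * pdist N (P k) (\<sigma> k)"
  shows "real K * (pdist N (P (K - 1)) (\<sigma> (K - 1)))\<^sup>2 \<le> 8 * (pdist N z (\<sigma> 0))\<^sup>2"
proof (rule residual_recursion_bound[where w = "\<lambda>k. pdist N z (P k)"])
  show "(pdist N (P k) (\<sigma> k))\<^sup>2 + (pdist N z (P k))\<^sup>2 \<le> (pdist N z (\<sigma> k))\<^sup>2" if "k < K" for k
    using power2_pdist_perturbed_eq_nash assms(1,5) P[OF that] by blast
  show "pdist N z (\<sigma> (Suc k)) \<le> pdist N z (P k) + \<epsilon> * pdist N (P k) (\<sigma> k)" if "k < K" for k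
    using pdist_triangle[of N z "\<sigma> (Suc k)" "P k"] P[OF that] by linarith
  show "pdist N (P (Suc k)) (\<sigma> (Suc k)) \<le> (1 + 2 * \<epsilon>) * pdist N (P k) (\<sigma> k)" if "Suc k < K" for k
    using assms(1,3) P[of k] P[OF that] that
    by (intro pdist_perturbed_eq_step[where \<mu> = \<mu>]) (auto simp: pdist_commute)
qed (use assms pdist_nonneg in auto)

text \<open>Split the gradient at \<open>S\<close> into the gradient at \<open>p\<close>, whose pairing is controlled by the
  first-order condition of \<open>p\<close>, plus a smoothness error.\<close>

lemma exploit_le_residual:
  assumes X: "\<And>i. i < N \<Longrightarrow> compact (X i) \<and> X i \<noteq> {}"
    and "0 \<le> L" and smooth: "\<And>p q. p \<in> profiles N X \<Longrightarrow> q \<in> profiles N X \<Longrightarrow>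
      (\<Sum>i<N. (norm (grad i p - grad i q))\<^sup>2) \<le> L\<^sup>2 * (pdist N p q)\<^sup>2"
    and grad_bound: "\<And>p. p \<in> profiles N X \<Longrightarrow> sqrt (\<Sum>i<N. (norm (grad i p))\<^sup>2) \<le> \<zeta>"
    and "0 \<le> \<mu>" and p: "perturbed_eq N X v \<mu> s p" and S: "S \<in> profiles N X"
    and close: "pdist N p S \<le> pdist N p s"
  shows "exploit N X v S \<le> ((\<mu> + L) * diam_prof N X + \<zeta>) * pdist N p s"
proof -
  define D where "D = diam_prof N X"
  have pX: "p \<in> profiles N X"
    using p by (simp add: perturbed_eq_def)
  have diam: "pdist N a b \<le> D" if "a \<in> profiles N X" "b \<in> profiles N X" for a b
    unfolding D_def using X that by (intro pdist_le_diam_prof) (auto intro: compact_imp_bounded)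
  obtain q where q: "q \<in> profiles N X"
    and exploit: "exploit N X v S \<le> pinner N (\<lambda>i. grad i S) (q - S)"
    using exploit_le_pinner_grad[OF X S] by blast
  have "pinner N ((\<lambda>i. grad i S) - (\<lambda>i. grad i p)) (q - S)
      \<le> pnorm N ((\<lambda>i. grad i S) - (\<lambda>i. grad i p)) * pdist N q S"
    unfolding pdist_eq_pnorm_diff by (rule pinner_le_pnorm_mult)
  also have "\<dots> \<le> L * pdist N S p * D"
  proof (rule mult_mono)
    have "pnorm N ((\<lambda>i. grad i S) - (\<lambda>i. grad i p)) \<le> sqrt (L\<^sup>2 * (pdist N S p)\<^sup>2)"
      unfolding pnorm_def using smooth[OF S pX] by simp
    also have "\<dots> = L * pdist N S p"
      using \<open>0 \<le> L\<close> pdist_nonneg[of N S p] by (simp add: real_sqrt_mult)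
    finally show "pnorm N ((\<lambda>i. grad i S) - (\<lambda>i. grad i p)) \<le> L * pdist N S p" .
  qed (use diam[OF q S] \<open>0 \<le> L\<close> pdist_nonneg in \<open>auto intro: mult_nonneg_nonneg\<close>)
  moreover have "pinner N (\<lambda>i. grad i p) (q - p) \<le> \<mu> * (pdist N p s * D)"
  proof -
    have "pinner N (\<lambda>i. grad i p) (q - p) \<le> \<mu> * pinner N (p - s) (q - p)"
      using perturbed_eq_pinner_le[OF p q] .
    also have "\<dots> \<le> \<mu> * (pdist N p s * D)"
      using pinner_le_pdist_mult[of N p s q p] diam[OF q pX] pdist_nonneg[of N p s]
      by (intro mult_left_mono \<open>0 \<le> \<mu>\<close>) (meson mult_left_mono order_trans)
    finally show ?thesis .
  qed
  moreover have "pinner N (\<lambda>i. grad i p) (p - S) \<le> \<zeta> * pdist N p S"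
  proof -
    have "pinner N (\<lambda>i. grad i p) (p - S) \<le> pnorm N (\<lambda>i. grad i p) * pdist N p S"
      unfolding pdist_eq_pnorm_diff by (rule pinner_le_pnorm_mult)
    also have "\<dots> \<le> \<zeta> * pdist N p S"
      using grad_bound[OF pX] pdist_nonneg unfolding pnorm_def by (rule mult_right_mono)
    finally show ?thesis .
  qed
  moreover have "pinner N (\<lambda>i. grad i S) (q - S) = pinner N ((\<lambda>i. grad i S) - (\<lambda>i. grad i p)) (q - S)
      + pinner N (\<lambda>i. grad i p) (q - p) + pinner N (\<lambda>i. grad i p) (p - S)"
    by (simp add: pinner_diff_left pinner_diff_right)
  moreover have "L * pdist N S p * D \<le> L * pdist N p s * D"
    using close \<open>0 \<le> L\<close> diam[OF pX pX] pdist_nonneg[of N p p]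
    by (intro mult_right_mono mult_left_mono) (auto simp: pdist_commute)
  moreover have "\<zeta> * pdist N p S \<le> \<zeta> * pdist N p s"
    using close order_trans[OF real_sqrt_ge_zero[OF sum_nonneg] grad_bound[OF pX]]
    by (intro mult_left_mono) auto
  ultimately show ?thesis
    using exploit unfolding D_def by (simp add: algebra_simps)
qed

lemma exploit_last_anchor_le:
  assumes X: "\<And>i. i < N \<Longrightarrow> compact (X i) \<and> X i \<noteq> {}"
    and "0 \<le> L" and smooth: "\<And>p q. p \<in> profiles N X \<Longrightarrow> q \<in> profiles N X \<Longrightarrow>
      (\<Sum>i<N. (norm (grad i p - grad i q))\<^sup>2) \<le> L\<^sup>2 * (pdist N p q)\<^sup>2"
    and grad_bound: "\<And>p. p \<in> profiles N X \<Longrightarrow> sqrt (\<Sum>i<N. (norm (grad i p))\<^sup>2) \<le> \<zeta>"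
    and "0 < \<mu>" "1 \<le> K" "0 \<le> \<epsilon>" "4 * real K * \<epsilon> \<le> 1" "nash_eq N X v z"
    and S: "\<sigma> K \<in> profiles N X"
    and P: "\<And>k. k < K \<Longrightarrow> perturbed_eq N X v \<mu> (\<sigma> k) (P k) \<and>
      pdist N (P k) (\<sigma> (Suc k)) \<le> \<epsilon> * pdist N (P k) (\<sigma> k)"
  shows "exploit N X v (\<sigma> K)
    \<le> 2 * sqrt 2 * ((\<mu> + L) * diam_prof N X + \<zeta>) / sqrt (real K) * pdist N z (\<sigma> 0)"
proof -
  define k where "k = K - 1"
  define r where "r = pdist N (P k) (\<sigma> k)"
  have k: "k < K" "Suc k = K"
    using \<open>1 \<le> K\<close> by (auto simp: k_def)
  have "1 * \<epsilon> \<le> real K * \<epsilon>"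
    using assms(6,7) by (intro mult_right_mono) auto
  then have "\<epsilon> * r \<le> r"
    using assms(7,8) pdist_nonneg unfolding r_def by (intro mult_left_le_one_le) auto
  moreover have "pdist N (P k) (\<sigma> K) \<le> \<epsilon> * r"
    using P[OF k(1)] unfolding r_def k(2) by simp
  ultimately have "pdist N (P k) (\<sigma> K) \<le> r"
    by linarith
  then have "exploit N X v (\<sigma> K) \<le> ((\<mu> + L) * diam_prof N X + \<zeta>) * r"
    using exploit_le_residual[OF X \<open>0 \<le> L\<close> smooth grad_bound _ _ S] \<open>0 < \<mu>\<close> P[OF k(1)]
    unfolding r_def by simp
  also have "\<dots> \<le> ((\<mu> + L) * diam_prof N X + \<zeta>) * (2 * sqrt 2 / sqrt (real K) * pdist N z (\<sigma> 0))"
  proof (rule mult_left_mono)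
    show "r \<le> 2 * sqrt 2 / sqrt (real K) * pdist N z (\<sigma> 0)"
      using le_two_sqrt_two_div_sqrt[of "real K" r "(pdist N z (\<sigma> 0))\<^sup>2"] assms(6)
        pdist_nonneg[of N z "\<sigma> 0"] last_residual_bound[where \<sigma> = \<sigma> and P = P, OF assms(5-9) P]
      unfolding r_def k_def by simp
    have "0 \<le> diam_prof N X"
      using X by (intro diam_prof_nonneg[OF _ S]) (auto intro: compact_imp_bounded)
    then show "0 \<le> (\<mu> + L) * diam_prof N X + \<zeta>"
      using assms(2,5) order_trans[OF real_sqrt_ge_zero[OF sum_nonneg] grad_bound[OF S]] by simp
  qed
  finally show ?thesis
    by (simp add: mult_ac)
qed

end

theorem theorem6:
  fixes N :: nat and X :: "nat \<Rightarrow> 'e::euclidean_space set"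
    and v :: "nat \<Rightarrow> (nat \<Rightarrow> 'e) \<Rightarrow> real"
    and grad :: "nat \<Rightarrow> (nat \<Rightarrow> 'e) \<Rightarrow> 'e"
    and L \<mu> \<zeta> c T :: real and K :: nat and \<sigma> :: "nat \<Rightarrow> nat \<Rightarrow> 'e"
    and \<pi>star :: "nat \<Rightarrow> 'e"
  assumes N: "N \<ge> 1"
    and X: "\<And>i. i < N \<Longrightarrow> X i \<noteq> {} \<and> compact (X i) \<and> convex (X i)"
    and v_cont: "\<And>i. i < N \<Longrightarrow> continuous_on (profiles N X) (v i)"
    and v_grad: "\<And>i p. i < N \<Longrightarrow> p \<in> profiles N X \<Longrightarrow>
        ((\<lambda>x. v i (p(i := x))) has_derivative (\<lambda>h. grad i p \<bullet> h)) (at (p i))"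
    and monotone: "\<And>p q. p \<in> profiles N X \<Longrightarrow> q \<in> profiles N X \<Longrightarrow>
        (\<Sum>i<N. (grad i p - grad i q) \<bullet> (p i - q i)) \<le> 0"
    and L_nonneg: "L \<ge> 0"
    and smooth: "\<And>p q. p \<in> profiles N X \<Longrightarrow> q \<in> profiles N X \<Longrightarrow>
        (\<Sum>i<N. (norm (grad i p - grad i q))\<^sup>2) \<le> L\<^sup>2 * (pdist N p q)\<^sup>2"
    and mu: "\<mu> > 0"
    and K: "K \<ge> 1"
    and c: "c > 1"
    and T: "T \<ge> max (3 / ln c * ln (real K) + ln 64 / ln c) 1"
    and sigma_in: "\<And>k. k \<le> K \<Longrightarrow> \<sigma> k \<in> profiles N X"
    and sigma_step: "\<And>k. k < K \<Longrightarrow> \<exists>p. perturbed_eq N X v \<mu> (\<sigma> k) p \<and>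
        pdist N p (\<sigma> (Suc k)) \<le> pdist N p (\<sigma> k) * c powr (- T)"
    and grad_bound: "\<And>p. p \<in> profiles N X \<Longrightarrow> sqrt (\<Sum>i<N. (norm (grad i p))\<^sup>2) \<le> \<zeta>"
    and nash: "nash_eq N X v \<pi>star"
  shows "exploit N X v (\<sigma> K) \<le>
    2 * sqrt 2 * ((\<mu> + L) * diam_prof N X + \<zeta>) / sqrt (real K) *
    sqrt (pdist N \<pi>star (\<sigma> 0) * (8 * pdist N \<pi>star (\<sigma> 0) + \<zeta> / \<mu>))"
proof -
  interpret monotone_game N X v grad
    using X v_grad monotone by unfold_locales auto
  define \<epsilon> where "\<epsilon> = c powr (- T)"
  have "real K * \<epsilon> \<le> 1/64"
    using tolerance_bound[OF c K] T unfolding \<epsilon>_def by simp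
  then have \<epsilon>: "0 \<le> \<epsilon>" "4 * real K * \<epsilon> \<le> 1"
    unfolding \<epsilon>_def by auto
  obtain P where P: "\<And>k. k < K \<Longrightarrow> perturbed_eq N X v \<mu> (\<sigma> k) (P k) \<and>
      pdist N (P k) (\<sigma> (Suc k)) \<le> \<epsilon> * pdist N (P k) (\<sigma> k)"
    using sigma_step unfolding \<epsilon>_def by (metis mult.commute)
  define d\<^sub>0 where "d\<^sub>0 = pdist N \<pi>star (\<sigma> 0)"
  have "0 \<le> \<zeta>"
    using order_trans[OF real_sqrt_ge_zero[OF sum_nonneg] grad_bound[OF sigma_in[OF le0]]] by simp
  have "0 \<le> diam_prof N X"
    using X by (intro diam_prof_nonneg[OF _ sigma_in[OF le0]]) (auto intro: compact_imp_bounded)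
  then have "0 \<le> (\<mu> + L) * diam_prof N X + \<zeta>"
    using mu L_nonneg \<open>0 \<le> \<zeta>\<close> by simp
  then have "0 \<le> 2 * sqrt 2 * ((\<mu> + L) * diam_prof N X + \<zeta>) / sqrt (real K)"
    by simp
  moreover have "d\<^sub>0 \<le> sqrt (d\<^sub>0 * (8 * d\<^sub>0 + \<zeta> / \<mu>))"
    using mu pdist_nonneg[of N \<pi>star "\<sigma> 0"] \<open>0 \<le> \<zeta>\<close>
    unfolding d\<^sub>0_def by (intro real_le_rsqrt) (simp add: power2_eq_square mult_left_mono)
  moreover have "exploit N X v (\<sigma> K)
      \<le> 2 * sqrt 2 * ((\<mu> + L) * diam_prof N X + \<zeta>) / sqrt (real K) * d\<^sub>0"
    unfolding d\<^sub>0_def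
    by (rule exploit_last_anchor_le[OF _ L_nonneg smooth grad_bound mu K \<epsilon> nash sigma_in[OF order_refl] P])
      (use X in blast)
  ultimately show ?thesis
    unfolding d\<^sub>0_def by (meson mult_left_mono order_trans)
qed

end
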